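(* Let $m>0$ and let $U_0=\frac12\ln(1-\frac{2m}{r})$, expressed in Weyl coordinates via $\rho=r\sin\theta\sqrt{1-2m/r}$, $z=(r-m)\cos\theta$ ($r>2m$, $\theta\in[0,\pi]$), and set $x=r/m-1$. Let the body surface be $r=r_0>2m$, i.e. $x_0=r_0/m-1$, so that $z_S=-mx_0$, $z_N=mx_0$. Then for every $y\in(-mx_0,mx_0)$ the unique solution $Z_y$ of $dZ_y=\cos\Upsilon_y\,dU_0+\sin\Upsilon_y\star dU_0$ on the exterior region $x>x_0$ vanishing at infinity is given by $$e^{-Z_y}=\frac{yx-m\cos\theta-\sqrt{m^2x^2+y^2-2mxy\cos\theta-m^2\sin^2\theta}}{(y-m)\sqrt{x^2-1}}$$ (with the limiting value obtained by continuity at $y=m$), and hence $$\Psi_y=\frac{\big(yx-m\cos\theta-\sqrt{m^2x^2+y^2-2mxy\cos\theta-m^2\sin^2\theta}\big)^2}{(y-m)^2(x+1)^2\sqrt{m^2x^2+y^2-2mxy\cos\theta-m^2\sin^2\theta}},\qquad \psi_y=\frac{1}{\sqrt{m^2x^2+y^2-2mxy\cos\theta-m^2\sin^2\theta}}.$$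
   Context: $\mathbb{E}^3$ has cylindrical (Weyl) coordinates $(\rho,z,\phi)$ and flat metric $\gamma=d\rho^2+dz^2+\rho^2d\phi^2$. On the half-plane $\mathbb{K}=\{(\rho,z):\rho\ge0\}$ with metric $d\rho^2+dz^2$, the Hodge star is fixed by $\star d\rho=-dz$, $\star dz=d\rho$. For a constant $y$, $\Upsilon_y\in[0,2\pi)$ is defined by $\cos\Upsilon_y=(z-y)/\sqrt{\rho^2+(z-y)^2}$, $\sin\Upsilon_y=\rho/\sqrt{\rho^2+(z-y)^2}$; $\psi_y=1/\sqrt{\rho^2+(z-y)^2}$ and $\Psi_y=e^{2U_0-2Z_y}/\sqrt{\rho^2+(z-y)^2}$. *)

theory Defs
  imports "HOL-Analysis.Analysis"
begin

text \<open>Points of the Weyl half-plane K are pairs (rho, z) :: real \<times> real.\<close>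

definition weylK :: "(real \<times> real) set" where
  "weylK = {p. fst p \<ge> 0}"

definition weyl_of :: "real \<Rightarrow> real \<Rightarrow> real \<Rightarrow> real \<times> real" where
  "weyl_of m r \<theta> = (r * sin \<theta> * sqrt (1 - 2 * m / r), (r - m) * cos \<theta>)"

text \<open>Inverse coordinate change: the Schwarzschild radius r as a function of (rho, z),
  r = m + (R_+ + R_-)/2 with R_\<pm> = sqrt(rho^2 + (z \<mp> m)^2).\<close>
definition weyl_r :: "real \<Rightarrow> real \<Rightarrow> real \<Rightarrow> real" where
  "weyl_r m \<rho> z = m + (sqrt (\<rho>\<^sup>2 + (z - m)\<^sup>2) + sqrt (\<rho>\<^sup>2 + (z + m)\<^sup>2)) / 2"

definition U0 :: "real \<Rightarrow> real \<times> real \<Rightarrow> real" where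
  "U0 m p = ln (1 - 2 * m / weyl_r m (fst p) (snd p)) / 2"

definition exterior :: "real \<Rightarrow> real \<Rightarrow> (real \<times> real) set" where
  "exterior m r0 = {p. fst p \<ge> 0 \<and> weyl_r m (fst p) (snd p) > r0}"

definition Upsilon :: "real \<Rightarrow> real \<times> real \<Rightarrow> real" where
  "Upsilon y p = (THE t. 0 \<le> t \<and> t < 2 * pi
      \<and> cos t = (snd p - y) / sqrt ((fst p)\<^sup>2 + (snd p - y)\<^sup>2)
      \<and> sin t = fst p / sqrt ((fst p)\<^sup>2 + (snd p - y)\<^sup>2))"

text \<open>Hodge star on 1-forms on K (1-forms = linear functionals on R^2, coordinates (rho,z)):
  star d rho = - dz, star dz = d rho, i.e. star (a d rho + b dz) = b d rho - a dz.\<close>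
definition hodge :: "(real \<times> real \<Rightarrow> real) \<Rightarrow> (real \<times> real \<Rightarrow> real)" where
  "hodge \<omega> = (\<lambda>h. \<omega> (0, 1) * fst h - \<omega> (1, 0) * snd h)"

definition solves_Z :: "real \<Rightarrow> (real \<times> real) set \<Rightarrow> real \<Rightarrow> (real \<times> real \<Rightarrow> real) \<Rightarrow> bool" where
  "solves_Z m D y Z \<longleftrightarrow> (\<forall>p\<in>D. \<exists>dU dZ.
      (U0 m has_derivative dU) (at p within weylK) \<and>
      (Z has_derivative dZ) (at p within weylK) \<and>
      dZ = (\<lambda>h. cos (Upsilon y p) * dU h + sin (Upsilon y p) * hodge dU h))"

definition vanishes_at_infinity :: "(real \<times> real) set \<Rightarrow> (real \<times> real \<Rightarrow> real) \<Rightarrow> bool" where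
  "vanishes_at_infinity D Z \<longleftrightarrow> (\<forall>e>0. \<exists>R. \<forall>p\<in>D. norm p > R \<longrightarrow> \<bar>Z p\<bar> < e)"

definition psi_y :: "real \<Rightarrow> real \<times> real \<Rightarrow> real" where
  "psi_y y p = 1 / sqrt ((fst p)\<^sup>2 + (snd p - y)\<^sup>2)"

definition Psi_y :: "real \<Rightarrow> (real \<times> real \<Rightarrow> real) \<Rightarrow> real \<Rightarrow> real \<times> real \<Rightarrow> real" where
  "Psi_y m Z y p = exp (2 * U0 m p - 2 * Z p) / sqrt ((fst p)\<^sup>2 + (snd p - y)\<^sup>2)"

definition Sroot :: "real \<Rightarrow> real \<Rightarrow> real \<Rightarrow> real \<Rightarrow> real" where
  "Sroot m y x \<theta> = sqrt (m\<^sup>2 * x\<^sup>2 + y\<^sup>2 - 2 * m * x * y * cos \<theta> - m\<^sup>2 * (sin \<theta>)\<^sup>2)"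

definition expmZ_formula :: "real \<Rightarrow> real \<Rightarrow> real \<Rightarrow> real \<Rightarrow> real" where
  "expmZ_formula m y x \<theta> =
     (y * x - m * cos \<theta> - Sroot m y x \<theta>) / ((y - m) * sqrt (x\<^sup>2 - 1))"

definition Psi_formula :: "real \<Rightarrow> real \<Rightarrow> real \<Rightarrow> real \<Rightarrow> real" where
  "Psi_formula m y x \<theta> =
     (y * x - m * cos \<theta> - Sroot m y x \<theta>)\<^sup>2 / ((y - m)\<^sup>2 * (x + 1)\<^sup>2 * Sroot m y x \<theta>)"

end

theory Submission
  imports Defs
begin

text \<open>
  Work in prolate spheroidal coordinates about the foci \<open>(0, \<plusminus>m)\<close>: \<open>\<sigma>\<close> and \<open>\<delta>\<close> are half the sum
  and half the difference of the distances to the two foci. Then \<open>U0 = ln ((\<sigma> - m) / (\<sigma> + m)) / 2\<close>,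
  and at the Schwarzschild point \<open>(r, \<theta>)\<close> one has \<open>\<sigma> = r - m = m x\<close> and \<open>\<delta> = m cos \<theta>\<close>.
  The candidate \<open>Z = ln (\<sigma>\<^sup>2 - m\<^sup>2) / 2 - ln ((y \<sigma> - m \<delta> - m R\<^sub>y) / (y - m))\<close>, with \<open>R\<^sub>y\<close> the distance
  to \<open>(0, y)\<close>, satisfies \<open>dZ = cos \<Upsilon> dU0 + sin \<Upsilon> \<star>dU0\<close> by a direct computation of both gradients
  in these coordinates. It is the difference of the logarithms of two quantities within bounded
  distance of \<open>|p|\<close>, so it vanishes at infinity. Two solutions differ by a function with zero
  differential; as \<open>\<sigma>\<close> does not decrease along outward rays, the exterior contains the ray
  \<open>t p\<close>, \<open>t \<ge> 1\<close>, through each of its points, so the difference is constant along it and hence zero.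
  Evaluating at the Schwarzschild point gives the closed formulas; for \<open>y = m\<close> the formula for
  \<open>e\<^sup>-\<^sup>Z\<close> has a removable singularity.
\<close>

section \<open>Linear forms on the half-plane\<close>

definition lin_form :: "real \<Rightarrow> real \<Rightarrow> real \<times> real \<Rightarrow> real" where
  "lin_form A B = (\<lambda>h. A * fst h + B * snd h)"

lemma has_derivative_lin_form_add:
  "(f has_derivative lin_form A B) F \<Longrightarrow> (g has_derivative lin_form C D) F \<Longrightarrow>
   ((\<lambda>x. f x + g x) has_derivative lin_form (A + C) (B + D)) F"
  by (drule (1) has_derivative_add) (simp add: lin_form_def algebra_simps)

lemma has_derivative_lin_form_diff:
  "(f has_derivative lin_form A B) F \<Longrightarrow> (g has_derivative lin_form C D) F \<Longrightarrow>
   ((\<lambda>x. f x - g x) has_derivative lin_form (A - C) (B - D)) F"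
  by (drule (1) has_derivative_diff) (simp add: lin_form_def algebra_simps)

lemma has_derivative_lin_form_scale:
  "(f has_derivative lin_form A B) F \<Longrightarrow> ((\<lambda>x. c * f x) has_derivative lin_form (c * A) (c * B)) F"
  by (drule has_derivative_mult_right[of _ _ _ c]) (simp add: lin_form_def algebra_simps)

lemma has_derivative_lin_form_divide:
  "(f has_derivative lin_form A B) F \<Longrightarrow> ((\<lambda>x. f x / c) has_derivative lin_form (A / c) (B / c)) F"
  by (drule has_derivative_lin_form_scale[of _ _ _ _ "inverse c"]) (simp add: field_simps)

lemma has_derivative_lin_form_compose:
  assumes "(g has_real_derivative g') (at (f p))" and "(f has_derivative lin_form A B) (at p)"
  shows "((\<lambda>x. g (f x)) has_derivative lin_form (g' * A) (g' * B)) (at p)"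
  using has_derivative_compose[OF assms(2) assms(1)[unfolded has_field_derivative_def]]
  by (simp add: lin_form_def algebra_simps)

lemma lin_form_hodge:
  assumes "C = c * A + s * B" and "D = c * B - s * A"
  shows "lin_form C D = (\<lambda>h. c * lin_form A B h + s * hodge (lin_form A B) h)"
  unfolding assms lin_form_def hodge_def by (simp add: fun_eq_iff algebra_simps)

section \<open>Prolate spheroidal coordinates\<close>

definition axis_dist :: "real \<Rightarrow> real \<times> real \<Rightarrow> real" where
  "axis_dist c p = dist p (0, c)"

lemma axis_dist_eq: "axis_dist c p = sqrt ((fst p)\<^sup>2 + (snd p - c)\<^sup>2)"
  by (cases p) (simp add: axis_dist_def dist_Pair_Pair dist_real_def)

lemma axis_dist_sq: "(axis_dist c p)\<^sup>2 = (fst p)\<^sup>2 + (snd p - c)\<^sup>2"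
  by (simp add: axis_dist_eq)

lemma axis_dist_nonneg: "axis_dist c p \<ge> 0"
  by (simp add: axis_dist_def)

lemma has_derivative_axis_dist:
  assumes "axis_dist c p > 0"
  shows "(axis_dist c has_derivative lin_form (fst p / axis_dist c p) ((snd p - c) / axis_dist c p)) (at p)"
proof -
  have "((\<lambda>q. sqrt ((fst q)\<^sup>2 + (snd q - c)\<^sup>2)) has_derivative
      (\<lambda>h. inverse (axis_dist c p) / 2 * (2 * fst p * fst h + 2 * (snd p - c) * snd h))) (at p)"
    using assms unfolding axis_dist_eq
    by (auto intro!: derivative_eq_intros simp: power2_eq_square)
  moreover have "(\<lambda>h. inverse (axis_dist c p) / 2 * (2 * fst p * fst h + 2 * (snd p - c) * snd h))
      = lin_form (fst p / axis_dist c p) ((snd p - c) / axis_dist c p)"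
    using assms by (simp add: lin_form_def fun_eq_iff field_simps)
  ultimately show ?thesis
    by (simp add: axis_dist_eq[abs_def])
qed

lemma abs_axis_dist_minus_norm_le: "\<bar>axis_dist c p - norm p\<bar> \<le> \<bar>c\<bar>"
proof -
  have "norm p = dist p 0"
    by (simp add: dist_norm)
  moreover have "dist (0, c) (0 :: real \<times> real) = \<bar>c\<bar>"
    by (simp add: dist_Pair_Pair dist_real_def zero_prod_def)
  ultimately show ?thesis
    unfolding axis_dist_def using dist_triangle[of p "(0, c)" 0] dist_triangle[of p 0 "(0, c)"]
    by (simp add: dist_commute abs_le_iff)
qed

text \<open>At the Schwarzschild point \<open>(r, \<theta>)\<close> these are \<open>r - m\<close> and \<open>m cos \<theta>\<close>
  (see \<open>weyl_of_prolate\<close>).\<close>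
definition prolate_sigma :: "real \<Rightarrow> real \<times> real \<Rightarrow> real" where
  "prolate_sigma m p = (axis_dist m p + axis_dist (-m) p) / 2"

definition prolate_delta :: "real \<Rightarrow> real \<times> real \<Rightarrow> real" where
  "prolate_delta m p = (axis_dist (-m) p - axis_dist m p) / 2"

lemma weyl_r_eq_prolate_sigma: "weyl_r m (fst p) (snd p) = m + prolate_sigma m p"
  by (simp add: weyl_r_def prolate_sigma_def axis_dist_eq)

lemma U0_eq_prolate_sigma: "U0 m = (\<lambda>p. ln (1 - 2 * m / (m + prolate_sigma m p)) / 2)"
  by (simp add: fun_eq_iff U0_def weyl_r_eq_prolate_sigma)

lemma abs_prolate_delta_le:
  assumes "m \<ge> 0"
  shows "\<bar>prolate_delta m p\<bar> \<le> m"
proof -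
  have "dist (0, m) (0 :: real, -m) = 2 * m"
    using assms by (simp add: dist_Pair_Pair dist_real_def real_sqrt_mult)
  then show ?thesis
    unfolding prolate_delta_def axis_dist_def
    using dist_triangle[of p "(0, -m)" "(0, m)"] dist_triangle[of p "(0, m)" "(0, -m)"]
    by (simp add: dist_commute abs_le_iff)
qed

lemma abs_prolate_sigma_minus_norm_le:
  assumes "m \<ge> 0"
  shows "\<bar>prolate_sigma m p - norm p\<bar> \<le> m"
proof -
  have "\<bar>axis_dist m p - norm p\<bar> \<le> m" "\<bar>axis_dist (-m) p - norm p\<bar> \<le> m"
    using abs_axis_dist_minus_norm_le[of m p] abs_axis_dist_minus_norm_le[of "-m" p] assms by simp_all
  then show ?thesis
    unfolding prolate_sigma_def by (auto simp: abs_le_iff field_simps)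
qed

lemma axis_dist_pos:
  assumes "m \<ge> 0" and "max \<bar>c\<bar> m < prolate_sigma m p"
  shows "axis_dist c p > 0"
proof (rule ccontr)
  assume "\<not> axis_dist c p > 0"
  then have "p = (0, c)"
    using axis_dist_nonneg[of c p] by (simp add: axis_dist_def)
  then have "prolate_sigma m p = (\<bar>c - m\<bar> + \<bar>c + m\<bar>) / 2"
    by (simp add: prolate_sigma_def axis_dist_eq)
  with assms show False by (simp add: abs_if split: if_splits)
qed

lemma axis_dist_foci_pos:
  assumes "m \<ge> 0" and "m < prolate_sigma m p"
  shows "axis_dist m p > 0" and "axis_dist (-m) p > 0"
  using axis_dist_pos[of m m p] axis_dist_pos[of m "-m" p] assms by simp_all

text \<open>The sum of the distances to the two foci \<open>(0, \<plusminus>m)\<close> does not decrease along outward rays: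
  \<open>p \<plusminus> e\<close> are convex combinations of \<open>t p \<plusminus> e\<close> with weights \<open>(1 \<plusminus> 1/t)/2\<close>.\<close>
lemma prolate_sigma_le_scaleR:
  assumes "t \<ge> 1"
  shows "prolate_sigma m p \<le> prolate_sigma m (t *\<^sub>R p)"
proof -
  define e :: "real \<times> real" where "e = (0, m)"
  define l where "l = (1 + 1/t) / 2"
  define u where "u = (1 - 1/t) / 2"
  have "l \<ge> 0" "u \<ge> 0" "l + u = 1" "(l - u) * t = 1"
    using assms by (simp_all add: l_def u_def field_simps)
  moreover have "l *\<^sub>R (t *\<^sub>R p - e) - u *\<^sub>R (t *\<^sub>R p + e) = ((l - u) * t) *\<^sub>R p - (l + u) *\<^sub>R e"
    and "l *\<^sub>R (t *\<^sub>R p + e) - u *\<^sub>R (t *\<^sub>R p - e) = ((l - u) * t) *\<^sub>R p + (l + u) *\<^sub>R e"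
    by (simp_all add: algebra_simps)
  ultimately have "p - e = l *\<^sub>R (t *\<^sub>R p - e) - u *\<^sub>R (t *\<^sub>R p + e)"
    and "p + e = l *\<^sub>R (t *\<^sub>R p + e) - u *\<^sub>R (t *\<^sub>R p - e)"
    by simp_all
  then have "norm (p - e) \<le> l * norm (t *\<^sub>R p - e) + u * norm (t *\<^sub>R p + e)"
    and "norm (p + e) \<le> l * norm (t *\<^sub>R p + e) + u * norm (t *\<^sub>R p - e)"
    using norm_triangle_ineq4 \<open>l \<ge> 0\<close> \<open>u \<ge> 0\<close> by (metis abs_of_nonneg norm_scaleR)+
  then have "norm (p - e) + norm (p + e) \<le> (l + u) * (norm (t *\<^sub>R p - e) + norm (t *\<^sub>R p + e))"
    by (simp add: algebra_simps)
  then have "norm (p - e) + norm (p + e) \<le> norm (t *\<^sub>R p - e) + norm (t *\<^sub>R p + e)"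
    using \<open>l + u = 1\<close> by simp
  moreover have "axis_dist m q = norm (q - e)" "axis_dist (-m) q = norm (q + e)" for q
    by (cases q; simp add: axis_dist_def dist_norm e_def)+
  ultimately show ?thesis
    unfolding prolate_sigma_def by simp
qed

lemma exterior_iff: "p \<in> exterior m r0 \<longleftrightarrow> fst p \<ge> 0 \<and> r0 - m < prolate_sigma m p"
  by (auto simp: exterior_def weyl_r_eq_prolate_sigma)

lemma exterior_scaleR:
  assumes "p \<in> exterior m r0" and "t \<ge> 1"
  shows "t *\<^sub>R p \<in> exterior m r0"
  using assms prolate_sigma_le_scaleR[OF assms(2), of m p]
  by (auto simp: exterior_iff)

lemma exterior_subset_weylK: "exterior m r0 \<subseteq> weylK"
  by (auto simp: exterior_def weylK_def)

lemma prolate_coordinates: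
  fixes m :: real and p :: "real \<times> real"
  assumes "m > 0"
  defines "\<sigma> \<equiv> prolate_sigma m p" and "\<delta> \<equiv> prolate_delta m p"
  shows "axis_dist m p = \<sigma> - \<delta>" and "axis_dist (-m) p = \<sigma> + \<delta>"
    and "snd p = \<sigma> * \<delta> / m"
    and "(fst p)\<^sup>2 = (\<sigma>\<^sup>2 - m\<^sup>2) * (m\<^sup>2 - \<delta>\<^sup>2) / m\<^sup>2"
proof -
  show a: "axis_dist m p = \<sigma> - \<delta>" and b: "axis_dist (-m) p = \<sigma> + \<delta>"
    by (simp_all add: \<sigma>_def \<delta>_def prolate_sigma_def prolate_delta_def field_simps)
  have "(\<sigma> + \<delta>)\<^sup>2 - (\<sigma> - \<delta>)\<^sup>2 = 4 * m * snd p"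
    using axis_dist_sq[of "-m" p] axis_dist_sq[of m p] unfolding a b by (simp add: power2_eq_square algebra_simps)
  then show z: "snd p = \<sigma> * \<delta> / m"
    using assms(1) by (simp add: field_simps power2_eq_square)
  have "(fst p)\<^sup>2 = (\<sigma> - \<delta>)\<^sup>2 - (\<sigma> * \<delta> / m - m)\<^sup>2"
    using axis_dist_sq[of m p] unfolding a z by simp
  also have "\<dots> = (\<sigma>\<^sup>2 - m\<^sup>2) * (m\<^sup>2 - \<delta>\<^sup>2) / m\<^sup>2"
    using assms(1) by (simp add: field_simps power2_eq_square)
  finally show "(fst p)\<^sup>2 = (\<sigma>\<^sup>2 - m\<^sup>2) * (m\<^sup>2 - \<delta>\<^sup>2) / m\<^sup>2" .
qed

lemma has_derivative_prolate:
  fixes m :: real and p :: "real \<times> real"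
  assumes "m > 0" and "axis_dist m p > 0" and "axis_dist (-m) p > 0"
  defines "\<sigma> \<equiv> prolate_sigma m p" and "\<delta> \<equiv> prolate_delta m p" and "\<rho> \<equiv> fst p"
  defines "P \<equiv> \<sigma>\<^sup>2 - \<delta>\<^sup>2" and "Q \<equiv> \<sigma>\<^sup>2 - m\<^sup>2"
  shows "(prolate_sigma m has_derivative lin_form (\<rho> * \<sigma> / P) (\<delta> * Q / (m * P))) (at p)"
    and "(prolate_delta m has_derivative lin_form (- \<rho> * \<delta> / P) (\<sigma> * (m\<^sup>2 - \<delta>\<^sup>2) / (m * P))) (at p)"
proof -
  note a = prolate_coordinates(1)[OF assms(1), of p, folded \<sigma>_def \<delta>_def]
    and b = prolate_coordinates(2)[OF assms(1), of p, folded \<sigma>_def \<delta>_def]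
    and snd_eq = prolate_coordinates(3)[OF assms(1), of p, folded \<sigma>_def \<delta>_def]
  have pos: "\<sigma> - \<delta> > 0" "\<sigma> + \<delta> > 0"
    using assms(2,3) unfolding a b by simp_all
  have P: "P = (\<sigma> - \<delta>) * (\<sigma> + \<delta>)"
    by (simp add: P_def power2_eq_square algebra_simps)
  have m: "m \<noteq> 0"
    using assms(1) by simp
  have sum: "(u / (\<sigma> - \<delta>) + v / (\<sigma> + \<delta>)) / 2 = ((u * (\<sigma> + \<delta>) + v * (\<sigma> - \<delta>)) / 2) / P"
    and diff: "(v / (\<sigma> + \<delta>) - u / (\<sigma> - \<delta>)) / 2 = ((v * (\<sigma> - \<delta>) - u * (\<sigma> + \<delta>)) / 2) / P"
    for u v
    using pos by (simp_all add: P add_frac_eq diff_frac_eq)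
  define z where "z = snd p"
  have "(\<rho> * (\<sigma> + \<delta>) + \<rho> * (\<sigma> - \<delta>)) / 2 = \<rho> * \<sigma>"
    and "(\<rho> * (\<sigma> - \<delta>) - \<rho> * (\<sigma> + \<delta>)) / 2 = - \<rho> * \<delta>"
    and "((z - m) * (\<sigma> + \<delta>) + (z + m) * (\<sigma> - \<delta>)) / 2 = z * \<sigma> - m * \<delta>"
    and "((z + m) * (\<sigma> - \<delta>) - (z - m) * (\<sigma> + \<delta>)) / 2 = m * \<sigma> - z * \<delta>"
    by (simp_all add: field_simps)
  moreover have "z * \<sigma> - m * \<delta> = \<delta> * Q / m" and "m * \<sigma> - z * \<delta> = \<sigma> * (m\<^sup>2 - \<delta>\<^sup>2) / m"
    unfolding z_def snd_eq Q_def using m by (simp_all add: field_simps power2_eq_square)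
  moreover note dR = has_derivative_axis_dist[OF assms(2)] has_derivative_axis_dist[OF assms(3)]
  ultimately show "(prolate_sigma m has_derivative lin_form (\<rho> * \<sigma> / P) (\<delta> * Q / (m * P))) (at p)"
    and "(prolate_delta m has_derivative lin_form (- \<rho> * \<delta> / P) (\<sigma> * (m\<^sup>2 - \<delta>\<^sup>2) / (m * P))) (at p)"
    using has_derivative_lin_form_divide[OF has_derivative_lin_form_add[OF dR], of 2]
      has_derivative_lin_form_divide[OF has_derivative_lin_form_diff[OF dR(2,1)], of 2]
    unfolding prolate_sigma_def[abs_def] prolate_delta_def[abs_def] a b \<rho>_def z_def[symmetric] sum diff
    by simp_all
qed

lemma prolate_dist_sq:
  fixes m \<sigma> \<delta> \<rho> d y :: real
  assumes "m \<noteq> 0"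
    and "\<rho>\<^sup>2 = (\<sigma>\<^sup>2 - m\<^sup>2) * (m\<^sup>2 - \<delta>\<^sup>2) / m\<^sup>2" and "d\<^sup>2 = \<rho>\<^sup>2 + (\<sigma> * \<delta> / m - y)\<^sup>2"
  shows "m * d\<^sup>2 = m * (\<sigma>\<^sup>2 + \<delta>\<^sup>2 + y\<^sup>2 - m\<^sup>2) - 2 * \<sigma> * \<delta> * y"
proof -
  have "(m * d)\<^sup>2 = (\<sigma>\<^sup>2 - m\<^sup>2) * (m\<^sup>2 - \<delta>\<^sup>2) + (\<sigma> * \<delta> - m * y)\<^sup>2"
    using assms by (simp add: field_simps power2_eq_square)
  then have "m * (m * d\<^sup>2) = m * (m * (\<sigma>\<^sup>2 + \<delta>\<^sup>2 + y\<^sup>2 - m\<^sup>2) - 2 * \<sigma> * \<delta> * y)"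
    by (simp add: power2_eq_square algebra_simps)
  then show ?thesis
    using assms(1) by simp
qed

section \<open>The explicit solution\<close>

text \<open>The \<open>\<rho>\<close>- and \<open>z\<close>-components of \<open>dZ = cos \<Upsilon> dU0 + sin \<Upsilon> \<star>dU0\<close> for
  \<open>Z = ln (\<sigma>\<^sup>2 - m\<^sup>2) / 2 - ln N\<close>: here \<open>\<sigma>\<^sub>\<rho>, \<sigma>\<^sub>z, \<delta>\<^sub>\<rho>, \<delta>\<^sub>z\<close> are the partial derivatives of \<open>\<sigma>\<close> and \<open>\<delta>\<close>
  (\<open>has_derivative_prolate\<close>), \<open>m / Q * \<sigma>\<^sub>\<rho>\<close> and \<open>m / Q * \<sigma>\<^sub>z\<close> those of \<open>U0\<close>, and \<open>cos \<Upsilon> = (z - y) / d\<close>,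
  \<open>sin \<Upsilon> = \<rho> / d\<close>.\<close>
lemma prolate_gradient_identity:
  fixes m \<sigma> \<delta> \<rho> d y :: real
  assumes nz: "m \<noteq> 0" "d \<noteq> 0" "\<sigma>\<^sup>2 - \<delta>\<^sup>2 \<noteq> 0" "\<sigma>\<^sup>2 - m\<^sup>2 \<noteq> 0" "y * \<sigma> - m * \<delta> - m * d \<noteq> 0"
    and rho_sq: "\<rho>\<^sup>2 = (\<sigma>\<^sup>2 - m\<^sup>2) * (m\<^sup>2 - \<delta>\<^sup>2) / m\<^sup>2"
    and d_sq: "d\<^sup>2 = \<rho>\<^sup>2 + (\<sigma> * \<delta> / m - y)\<^sup>2"
  defines "Q \<equiv> \<sigma>\<^sup>2 - m\<^sup>2" and "P \<equiv> \<sigma>\<^sup>2 - \<delta>\<^sup>2" and "N \<equiv> y * \<sigma> - m * \<delta> - m * d"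
    and "z \<equiv> \<sigma> * \<delta> / m"
  defines "\<sigma>\<^sub>\<rho> \<equiv> \<rho> * \<sigma> / P" and "\<sigma>\<^sub>z \<equiv> \<delta> * Q / (m * P)"
    and "\<delta>\<^sub>\<rho> \<equiv> - \<rho> * \<delta> / P" and "\<delta>\<^sub>z \<equiv> \<sigma> * (m\<^sup>2 - \<delta>\<^sup>2) / (m * P)"
  shows "\<sigma> / Q * \<sigma>\<^sub>\<rho> - 1 / N * (y * \<sigma>\<^sub>\<rho> - m * \<delta>\<^sub>\<rho> - m * (\<rho> / d))
      = (z - y) / d * (m / Q * \<sigma>\<^sub>\<rho>) + \<rho> / d * (m / Q * \<sigma>\<^sub>z)"
    and "\<sigma> / Q * \<sigma>\<^sub>z - 1 / N * (y * \<sigma>\<^sub>z - m * \<delta>\<^sub>z - m * ((z - y) / d))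
      = (z - y) / d * (m / Q * \<sigma>\<^sub>z) - \<rho> / d * (m / Q * \<sigma>\<^sub>\<rho>)"
proof -
  have dd: "m * d\<^sup>2 = m * (\<sigma>\<^sup>2 + \<delta>\<^sup>2 + y\<^sup>2 - m\<^sup>2) - 2 * \<sigma> * \<delta> * y"
    by (rule prolate_dist_sq[OF nz(1) rho_sq d_sq])
  have rr: "m\<^sup>2 * \<rho>\<^sup>2 = Q * (m\<^sup>2 - \<delta>\<^sup>2)"
    using rho_sq nz(1) by (simp add: Q_def field_simps)
  have nz': "Q \<noteq> 0" "P \<noteq> 0" "N \<noteq> 0"
    using nz by (simp_all add: Q_def P_def N_def)
  show "\<sigma> / Q * \<sigma>\<^sub>\<rho> - 1 / N * (y * \<sigma>\<^sub>\<rho> - m * \<delta>\<^sub>\<rho> - m * (\<rho> / d))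
      = (z - y) / d * (m / Q * \<sigma>\<^sub>\<rho>) + \<rho> / d * (m / Q * \<sigma>\<^sub>z)"
    unfolding \<sigma>\<^sub>\<rho>_def \<sigma>\<^sub>z_def \<delta>\<^sub>\<rho>_def z_def using nz nz' dd
    by (simp add: field_simps) (simp add: N_def P_def Q_def power2_eq_square, algebra)
  show "\<sigma> / Q * \<sigma>\<^sub>z - 1 / N * (y * \<sigma>\<^sub>z - m * \<delta>\<^sub>z - m * ((z - y) / d))
      = (z - y) / d * (m / Q * \<sigma>\<^sub>z) - \<rho> / d * (m / Q * \<sigma>\<^sub>\<rho>)"
    unfolding \<sigma>\<^sub>\<rho>_def \<sigma>\<^sub>z_def \<delta>\<^sub>z_def z_def using nz nz' dd rr
    by (simp add: field_simps) (simp add: N_def P_def Q_def power2_eq_square, algebra)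
qed

text \<open>The same for \<open>y = m\<close>, where \<open>Z = ln (\<sigma> - \<delta>) - ln (\<sigma>\<^sup>2 - m\<^sup>2) / 2\<close>.\<close>
lemma prolate_gradient_identity_pole:
  fixes m \<sigma> \<delta> \<rho> :: real
  assumes nz: "m \<noteq> 0" "\<sigma> - \<delta> \<noteq> 0" "\<sigma> + \<delta> \<noteq> 0" "\<sigma>\<^sup>2 - m\<^sup>2 \<noteq> 0"
    and rho_sq: "\<rho>\<^sup>2 = (\<sigma>\<^sup>2 - m\<^sup>2) * (m\<^sup>2 - \<delta>\<^sup>2) / m\<^sup>2"
  defines "Q \<equiv> \<sigma>\<^sup>2 - m\<^sup>2" and "P \<equiv> \<sigma>\<^sup>2 - \<delta>\<^sup>2" and "z \<equiv> \<sigma> * \<delta> / m"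
  defines "\<sigma>\<^sub>\<rho> \<equiv> \<rho> * \<sigma> / P" and "\<sigma>\<^sub>z \<equiv> \<delta> * Q / (m * P)"
  shows "1 / (\<sigma> - \<delta>) * (\<rho> / (\<sigma> - \<delta>)) - \<sigma> / Q * \<sigma>\<^sub>\<rho>
      = (z - m) / (\<sigma> - \<delta>) * (m / Q * \<sigma>\<^sub>\<rho>) + \<rho> / (\<sigma> - \<delta>) * (m / Q * \<sigma>\<^sub>z)"
    and "1 / (\<sigma> - \<delta>) * ((z - m) / (\<sigma> - \<delta>)) - \<sigma> / Q * \<sigma>\<^sub>z
      = (z - m) / (\<sigma> - \<delta>) * (m / Q * \<sigma>\<^sub>z) - \<rho> / (\<sigma> - \<delta>) * (m / Q * \<sigma>\<^sub>\<rho>)"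
proof -
  define a where "a = \<sigma> - \<delta>"
  have rr: "m\<^sup>2 * \<rho>\<^sup>2 = Q * (m\<^sup>2 - \<delta>\<^sup>2)"
    using rho_sq nz(1) by (simp add: Q_def field_simps)
  have nz': "a \<noteq> 0" "Q \<noteq> 0" "P \<noteq> 0"
    using nz by (simp_all add: a_def Q_def P_def power2_eq_square square_diff_square_factored)
  show "1 / (\<sigma> - \<delta>) * (\<rho> / (\<sigma> - \<delta>)) - \<sigma> / Q * \<sigma>\<^sub>\<rho>
      = (z - m) / (\<sigma> - \<delta>) * (m / Q * \<sigma>\<^sub>\<rho>) + \<rho> / (\<sigma> - \<delta>) * (m / Q * \<sigma>\<^sub>z)"
    unfolding \<sigma>\<^sub>\<rho>_def \<sigma>\<^sub>z_def z_def a_def[symmetric] using nz(1) nz'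
    by (simp add: field_simps) (simp add: a_def P_def Q_def power2_eq_square, algebra)
  show "1 / (\<sigma> - \<delta>) * ((z - m) / (\<sigma> - \<delta>)) - \<sigma> / Q * \<sigma>\<^sub>z
      = (z - m) / (\<sigma> - \<delta>) * (m / Q * \<sigma>\<^sub>z) - \<rho> / (\<sigma> - \<delta>) * (m / Q * \<sigma>\<^sub>\<rho>)"
    unfolding \<sigma>\<^sub>\<rho>_def \<sigma>\<^sub>z_def z_def a_def[symmetric] using nz(1) nz' rr
    by (simp add: field_simps) (simp add: a_def P_def Q_def power2_eq_square, algebra)
qed

lemma prolate_numerator_sq_diff:
  fixes m \<sigma> \<delta> \<rho> d y :: real
  assumes "m \<noteq> 0"
    and rho_sq: "\<rho>\<^sup>2 = (\<sigma>\<^sup>2 - m\<^sup>2) * (m\<^sup>2 - \<delta>\<^sup>2) / m\<^sup>2"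
    and d_sq: "d\<^sup>2 = \<rho>\<^sup>2 + (\<sigma> * \<delta> / m - y)\<^sup>2"
  shows "(m * d)\<^sup>2 - (y * \<sigma> - m * \<delta>)\<^sup>2 = (\<sigma>\<^sup>2 - m\<^sup>2) * (m\<^sup>2 - y\<^sup>2)"
proof -
  have "(m * d)\<^sup>2 = m * (m * d\<^sup>2)"
    by (simp add: power2_eq_square)
  also have "\<dots> = m * (m * (\<sigma>\<^sup>2 + \<delta>\<^sup>2 + y\<^sup>2 - m\<^sup>2) - 2 * \<sigma> * \<delta> * y)"
    using prolate_dist_sq[OF assms] by simp
  finally show ?thesis
    by (simp add: power2_eq_square algebra_simps)
qed

lemma prolate_numerator_div_pos:
  fixes m \<sigma> \<delta> \<rho> d y :: real
  assumes "m > 0" and "\<sigma> > m" and "\<bar>\<delta>\<bar> \<le> m" and "d \<ge> 0" and "y \<noteq> m"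
    and rho_sq: "\<rho>\<^sup>2 = (\<sigma>\<^sup>2 - m\<^sup>2) * (m\<^sup>2 - \<delta>\<^sup>2) / m\<^sup>2"
    and d_sq: "d\<^sup>2 = \<rho>\<^sup>2 + (\<sigma> * \<delta> / m - y)\<^sup>2"
  shows "(y * \<sigma> - m * \<delta> - m * d) / (y - m) > 0"
proof -
  have key: "(m * d)\<^sup>2 - (y * \<sigma> - m * \<delta>)\<^sup>2 = (\<sigma>\<^sup>2 - m\<^sup>2) * (m\<^sup>2 - y\<^sup>2)"
    using prolate_numerator_sq_diff[OF _ rho_sq d_sq] assms(1) by simp
  have Q: "\<sigma>\<^sup>2 - m\<^sup>2 > 0"
    using assms(1,2) by (simp add: power_strict_mono)
  have md: "m * d \<ge> 0" and m_delta: "m * \<delta> \<le> m * m"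
    using assms(1,3,4) by (simp_all add: abs_le_iff)
  consider "y > m" | "y \<le> -m" | "-m < y" "y < m"
    using assms(5) by linarith
  then show ?thesis
  proof cases
    case 1
    then have "m\<^sup>2 - y\<^sup>2 < 0"
      using assms(1) by (simp add: power_strict_mono)
    with Q have "(\<sigma>\<^sup>2 - m\<^sup>2) * (m\<^sup>2 - y\<^sup>2) < 0"
      by (rule mult_pos_neg)
    then have "(m * d)\<^sup>2 < (y * \<sigma> - m * \<delta>)\<^sup>2"
      using key by linarith
    moreover have "m * m < y * \<sigma>"
      using 1 assms(1,2) by (simp add: mult_strict_mono)
    then have "0 \<le> y * \<sigma> - m * \<delta>"
      using m_delta by linarith
    ultimately have "m * d < y * \<sigma> - m * \<delta>"
      by (rule power2_less_imp_less)
    with 1 show ?thesis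
      by simp
  next
    case 2
    then have "y * \<sigma> \<le> - m * \<sigma>"
      using assms(1,2) by (intro mult_right_mono) simp_all
    moreover have "\<sigma> + \<delta> > 0"
      using assms(2,3) by (auto simp: abs_le_iff)
    then have "m * \<sigma> + m * \<delta> > 0"
      using assms(1) by (simp flip: distrib_left)
    ultimately have "y * \<sigma> - m * \<delta> - m * d < 0"
      using md by linarith
    with 2 assms(1) show ?thesis
      by (simp add: divide_neg_neg)
  next
    case 3
    then have "\<bar>y\<bar>\<^sup>2 < m\<^sup>2"
      by (intro power_strict_mono) simp_all
    with Q have "(\<sigma>\<^sup>2 - m\<^sup>2) * (m\<^sup>2 - y\<^sup>2) > 0"
      by simp
    then have "\<bar>y * \<sigma> - m * \<delta>\<bar>\<^sup>2 < (m * d)\<^sup>2"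
      using key by simp
    from power2_less_imp_less[OF this md] have "\<bar>y * \<sigma> - m * \<delta>\<bar> < m * d" .
    with 3 show ?thesis
      by (simp add: divide_neg_neg)
  qed
qed

lemma cos_sin_Upsilon:
  assumes "(fst p)\<^sup>2 + (snd p - y)\<^sup>2 > 0"
  defines "D \<equiv> sqrt ((fst p)\<^sup>2 + (snd p - y)\<^sup>2)"
  shows "cos (Upsilon y p) = (snd p - y) / D" and "sin (Upsilon y p) = fst p / D"
proof -
  have "D > 0" and D_sq: "D\<^sup>2 = (fst p)\<^sup>2 + (snd p - y)\<^sup>2"
    using assms by (simp_all add: D_def)
  have "((snd p - y) / D)\<^sup>2 + (fst p / D)\<^sup>2 = ((fst p)\<^sup>2 + (snd p - y)\<^sup>2) / D\<^sup>2"
    by (simp add: power_divide add_divide_distrib)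
  also have "\<dots> = 1"
    using \<open>D > 0\<close> by (simp add: D_sq[symmetric])
  finally have "((snd p - y) / D)\<^sup>2 + (fst p / D)\<^sup>2 = 1" .
  then obtain t where t: "0 \<le> t" "t < 2 * pi" "(snd p - y) / D = cos t" "fst p / D = sin t"
    by (rule sincos_total_2pi)
  have "u = t" if u: "0 \<le> u" "u < 2 * pi" "cos u = cos t" "sin u = sin t" for u
  proof -
    obtain n :: int where n: "u = t + 2 * pi * n"
      using u sin_cos_eq_iff by metis
    then have "2 * pi * (-1) < 2 * pi * of_int n" and "2 * pi * of_int n < 2 * pi * 1"
      using t u by linarith+
    then have "-1 < n" and "n < 1"
      by (simp_all only: mult_less_cancel_left_pos pi_gt_zero zero_less_mult_iff zero_less_numeral
          simp_thms of_int_less_iff of_int_minus of_int_1)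
    with n show "u = t"
      by simp
  qed
  with t have "\<exists>!u. 0 \<le> u \<and> u < 2 * pi \<and> cos u = (snd p - y) / D \<and> sin u = fst p / D"
    by (intro ex1I[of _ t]) auto
  from theI'[OF this] show "cos (Upsilon y p) = (snd p - y) / D" and "sin (Upsilon y p) = fst p / D"
    unfolding Upsilon_def D_def by simp_all
qed

lemma cos_sin_Upsilon_prolate:
  assumes "m > 0" and "max \<bar>y\<bar> m < prolate_sigma m p"
  shows "cos (Upsilon y p) = (prolate_sigma m p * prolate_delta m p / m - y) / axis_dist y p"
    and "sin (Upsilon y p) = fst p / axis_dist y p"
proof -
  have "axis_dist y p > 0"
    using axis_dist_pos[of m y p] assms by simp
  then show "cos (Upsilon y p) = (prolate_sigma m p * prolate_delta m p / m - y) / axis_dist y p"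
    and "sin (Upsilon y p) = fst p / axis_dist y p"
    using cos_sin_Upsilon[of p y] prolate_coordinates(3)[OF assms(1), of p] by (simp_all add: axis_dist_eq)
qed

definition Zsol_numerator :: "real \<Rightarrow> real \<Rightarrow> real \<times> real \<Rightarrow> real" where
  "Zsol_numerator m y p = y * prolate_sigma m p - m * prolate_delta m p - m * axis_dist y p"

text \<open>For \<open>y = m\<close> the numerator vanishes identically, since \<open>axis_dist m = prolate_sigma m - prolate_delta m\<close>;
  the second branch is the limit of the first as \<open>y \<rightarrow> m\<close>.\<close>
definition Zsol :: "real \<Rightarrow> real \<Rightarrow> real \<times> real \<Rightarrow> real" where
  "Zsol m y p =
    (if y \<noteq> m then ln ((prolate_sigma m p)\<^sup>2 - m\<^sup>2) / 2 - ln (Zsol_numerator m y p / (y - m))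
     else ln (axis_dist m p) - ln ((prolate_sigma m p)\<^sup>2 - m\<^sup>2) / 2)"

lemma has_real_derivative_half_ln_sq_diff:
  assumes "\<bar>m\<bar> < s"
  shows "((\<lambda>s. ln (s\<^sup>2 - m\<^sup>2) / 2) has_real_derivative s / (s\<^sup>2 - m\<^sup>2)) (at s)"
proof -
  have "\<bar>m\<bar>\<^sup>2 < s\<^sup>2"
    using assms by (intro power_strict_mono) simp_all
  then have "s\<^sup>2 - m\<^sup>2 > 0"
    by simp
  moreover have "((\<lambda>s. s\<^sup>2 - m\<^sup>2) has_real_derivative 2 * s) (at s)"
    by (auto intro!: derivative_eq_intros)
  ultimately have "((\<lambda>s. ln (s\<^sup>2 - m\<^sup>2)) has_real_derivative 1 / (s\<^sup>2 - m\<^sup>2) * (2 * s)) (at s)"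
    by (rule DERIV_chain2[OF DERIV_ln_divide])
  moreover have "1 / X * (2 * s) / 2 = s / X" for X :: real
    by simp
  ultimately show ?thesis
    by (metis DERIV_cdivide DERIV_cong)
qed

lemma has_derivative_U0:
  assumes "m > 0" and "prolate_sigma m p > m"
  defines "\<sigma> \<equiv> prolate_sigma m p" and "\<delta> \<equiv> prolate_delta m p"
  shows "(U0 m has_derivative lin_form (m / (\<sigma>\<^sup>2 - m\<^sup>2) * (fst p * \<sigma> / (\<sigma>\<^sup>2 - \<delta>\<^sup>2)))
      (m / (\<sigma>\<^sup>2 - m\<^sup>2) * (\<delta> * (\<sigma>\<^sup>2 - m\<^sup>2) / (m * (\<sigma>\<^sup>2 - \<delta>\<^sup>2))))) (at p)"
proof -
  have "\<sigma> - m > 0" "\<sigma> + m > 0"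
    using assms(1,2) by (simp_all add: \<sigma>_def)
  moreover have "1 - 2 * m / (m + \<sigma>) = (\<sigma> - m) / (\<sigma> + m)"
    using \<open>\<sigma> + m > 0\<close> by (simp add: field_simps)
  moreover have "\<sigma>\<^sup>2 - m\<^sup>2 = (\<sigma> - m) * (\<sigma> + m)"
    by (simp add: power2_eq_square algebra_simps)
  ultimately have pos: "1 - 2 * m / (m + \<sigma>) > 0"
    and val: "inverse (1 - 2 * m / (m + \<sigma>)) * (2 * m / (m + \<sigma>)\<^sup>2) / 2 = m / (\<sigma>\<^sup>2 - m\<^sup>2)"
    by (simp, simp add: power2_eq_square add.commute)
  have "((\<lambda>s. 1 - 2 * m / (m + s)) has_real_derivative 2 * m / (m + \<sigma>)\<^sup>2) (at \<sigma>)"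
    using \<open>\<sigma> + m > 0\<close> by (auto intro!: derivative_eq_intros simp: power2_eq_square)
  from DERIV_cdivide[OF DERIV_chain2[OF DERIV_ln[OF pos] this], of 2]
  have radial: "((\<lambda>s. ln (1 - 2 * m / (m + s)) / 2) has_real_derivative m / (\<sigma>\<^sup>2 - m\<^sup>2)) (at \<sigma>)"
    by (rule DERIV_cong) (rule val)
  have "axis_dist m p > 0" "axis_dist (-m) p > 0"
    using axis_dist_foci_pos[of m p] assms(1,2) by simp_all
  from has_derivative_lin_form_compose[OF radial[unfolded \<sigma>_def] has_derivative_prolate(1)[OF assms(1) this]]
  show ?thesis
    unfolding U0_eq_prolate_sigma \<sigma>_def \<delta>_def .
qed

lemma axis_dist_sq_prolate:
  assumes "m > 0"
  shows "(axis_dist c p)\<^sup>2 = (fst p)\<^sup>2 + (prolate_sigma m p * prolate_delta m p / m - c)\<^sup>2"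
  using axis_dist_sq[of c p] prolate_coordinates(3)[OF assms, of p] by simp

lemma Zsol_numerator_div_pos:
  assumes "m > 0" and "prolate_sigma m p > m" and "y \<noteq> m"
  shows "Zsol_numerator m y p / (y - m) > 0"
  unfolding Zsol_numerator_def
  by (rule prolate_numerator_div_pos[OF assms(1,2) abs_prolate_delta_le axis_dist_nonneg assms(3)
        prolate_coordinates(4)[OF assms(1)] axis_dist_sq_prolate[OF assms(1)]])
    (use assms(1) in simp)

lemma has_derivative_Zsol:
  fixes m y :: real and p :: "real \<times> real"
  assumes "m > 0" and "y \<noteq> m" and "max \<bar>y\<bar> m < prolate_sigma m p"
  defines "\<sigma> \<equiv> prolate_sigma m p" and "\<delta> \<equiv> prolate_delta m p" and "\<rho> \<equiv> fst p"
    and "d \<equiv> axis_dist y p" and "N \<equiv> Zsol_numerator m y p"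
  defines "\<sigma>\<^sub>\<rho> \<equiv> \<rho> * \<sigma> / (\<sigma>\<^sup>2 - \<delta>\<^sup>2)" and "\<sigma>\<^sub>z \<equiv> \<delta> * (\<sigma>\<^sup>2 - m\<^sup>2) / (m * (\<sigma>\<^sup>2 - \<delta>\<^sup>2))"
    and "\<delta>\<^sub>\<rho> \<equiv> - \<rho> * \<delta> / (\<sigma>\<^sup>2 - \<delta>\<^sup>2)" and "\<delta>\<^sub>z \<equiv> \<sigma> * (m\<^sup>2 - \<delta>\<^sup>2) / (m * (\<sigma>\<^sup>2 - \<delta>\<^sup>2))"
  shows "(Zsol m y has_derivative
      lin_form (\<sigma> / (\<sigma>\<^sup>2 - m\<^sup>2) * \<sigma>\<^sub>\<rho> - 1 / N * (y * \<sigma>\<^sub>\<rho> - m * \<delta>\<^sub>\<rho> - m * (\<rho> / d)))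
        (\<sigma> / (\<sigma>\<^sup>2 - m\<^sup>2) * \<sigma>\<^sub>z - 1 / N * (y * \<sigma>\<^sub>z - m * \<delta>\<^sub>z - m * ((snd p - y) / d)))) (at p)"
proof -
  have pos: "axis_dist m p > 0" "axis_dist (-m) p > 0" "d > 0"
    using axis_dist_foci_pos[of m p] axis_dist_pos[of m y p] assms(1,3) by (simp_all add: d_def)
  note d_prolate = has_derivative_prolate[OF assms(1) pos(1,2)]
  have N_pos: "N / (y - m) > 0"
    using Zsol_numerator_div_pos[OF assms(1) _ assms(2)] assms(3) by (simp add: N_def)
  have "((\<lambda>t. ln (t / (y - m))) has_real_derivative 1 / N) (at N)"
  proof -
    have "((\<lambda>t. ln (t / (y - m))) has_real_derivative inverse (N / (y - m)) * (1 / (y - m))) (at N)"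
      using N_pos by (auto intro!: derivative_eq_intros)
    then show ?thesis
      by (rule DERIV_cong) (use assms(2) in simp)
  qed
  moreover have "(Zsol_numerator m y has_derivative
      lin_form (y * \<sigma>\<^sub>\<rho> - m * \<delta>\<^sub>\<rho> - m * (\<rho> / d)) (y * \<sigma>\<^sub>z - m * \<delta>\<^sub>z - m * ((snd p - y) / d))) (at p)"
    unfolding Zsol_numerator_def[abs_def] \<sigma>\<^sub>\<rho>_def \<sigma>\<^sub>z_def \<delta>\<^sub>\<rho>_def \<delta>\<^sub>z_def \<sigma>_def \<delta>_def \<rho>_def d_def
    by (intro has_derivative_lin_form_diff has_derivative_lin_form_scale d_prolate
        has_derivative_axis_dist pos(3)[unfolded d_def])
  ultimately have "((\<lambda>p. ln (Zsol_numerator m y p / (y - m))) has_derivative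
      lin_form (1 / N * (y * \<sigma>\<^sub>\<rho> - m * \<delta>\<^sub>\<rho> - m * (\<rho> / d))) (1 / N * (y * \<sigma>\<^sub>z - m * \<delta>\<^sub>z - m * ((snd p - y) / d)))) (at p)"
    unfolding N_def by (rule has_derivative_lin_form_compose)
  moreover have "((\<lambda>p. ln ((prolate_sigma m p)\<^sup>2 - m\<^sup>2) / 2) has_derivative
      lin_form (\<sigma> / (\<sigma>\<^sup>2 - m\<^sup>2) * \<sigma>\<^sub>\<rho>) (\<sigma> / (\<sigma>\<^sup>2 - m\<^sup>2) * \<sigma>\<^sub>z)) (at p)"
    unfolding \<sigma>_def \<sigma>\<^sub>\<rho>_def \<sigma>\<^sub>z_def \<delta>_def \<rho>_def
    by (rule has_derivative_lin_form_compose[OF has_real_derivative_half_ln_sq_diff d_prolate(1)])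
      (use assms(1,3) in simp)
  moreover have "Zsol m y = (\<lambda>p. ln ((prolate_sigma m p)\<^sup>2 - m\<^sup>2) / 2 - ln (Zsol_numerator m y p / (y - m)))"
    using assms(2) by (simp add: fun_eq_iff Zsol_def)
  ultimately show ?thesis
    by (simp add: has_derivative_lin_form_diff)
qed

lemma has_derivative_Zsol_pole:
  fixes m :: real and p :: "real \<times> real"
  assumes "m > 0" and "prolate_sigma m p > m"
  defines "\<sigma> \<equiv> prolate_sigma m p" and "\<delta> \<equiv> prolate_delta m p" and "\<rho> \<equiv> fst p"
  defines "\<sigma>\<^sub>\<rho> \<equiv> \<rho> * \<sigma> / (\<sigma>\<^sup>2 - \<delta>\<^sup>2)" and "\<sigma>\<^sub>z \<equiv> \<delta> * (\<sigma>\<^sup>2 - m\<^sup>2) / (m * (\<sigma>\<^sup>2 - \<delta>\<^sup>2))"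
  shows "(Zsol m m has_derivative
      lin_form (1 / (\<sigma> - \<delta>) * (\<rho> / (\<sigma> - \<delta>)) - \<sigma> / (\<sigma>\<^sup>2 - m\<^sup>2) * \<sigma>\<^sub>\<rho>)
        (1 / (\<sigma> - \<delta>) * ((snd p - m) / (\<sigma> - \<delta>)) - \<sigma> / (\<sigma>\<^sup>2 - m\<^sup>2) * \<sigma>\<^sub>z)) (at p)"
proof -
  have pos: "axis_dist m p > 0" "axis_dist (-m) p > 0"
    using axis_dist_foci_pos[of m p] assms(1,2) by simp_all
  note R = prolate_coordinates(1)[OF assms(1), of p, folded \<sigma>_def \<delta>_def]
  have "(ln has_real_derivative 1 / axis_dist m p) (at (axis_dist m p))"
    using pos(1) DERIV_ln[of "axis_dist m p"] by (simp add: divide_inverse)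
  from has_derivative_lin_form_compose[OF this has_derivative_axis_dist[OF pos(1)]]
  have "((\<lambda>p. ln (axis_dist m p)) has_derivative
      lin_form (1 / (\<sigma> - \<delta>) * (\<rho> / (\<sigma> - \<delta>))) (1 / (\<sigma> - \<delta>) * ((snd p - m) / (\<sigma> - \<delta>)))) (at p)"
    unfolding R \<rho>_def .
  moreover have "((\<lambda>p. ln ((prolate_sigma m p)\<^sup>2 - m\<^sup>2) / 2) has_derivative
      lin_form (\<sigma> / (\<sigma>\<^sup>2 - m\<^sup>2) * \<sigma>\<^sub>\<rho>) (\<sigma> / (\<sigma>\<^sup>2 - m\<^sup>2) * \<sigma>\<^sub>z)) (at p)"
    unfolding \<sigma>_def \<sigma>\<^sub>\<rho>_def \<sigma>\<^sub>z_def \<delta>_def \<rho>_def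
    by (rule has_derivative_lin_form_compose[OF has_real_derivative_half_ln_sq_diff
          has_derivative_prolate(1)[OF assms(1) pos]])
      (use assms(1,2) in simp)
  moreover have "Zsol m m = (\<lambda>p. ln (axis_dist m p) - ln ((prolate_sigma m p)\<^sup>2 - m\<^sup>2) / 2)"
    by (simp add: fun_eq_iff Zsol_def)
  ultimately show ?thesis
    by (simp add: has_derivative_lin_form_diff)
qed

lemma Zsol_equation_at:
  fixes m y :: real and p :: "real \<times> real"
  assumes "m > 0" and "max \<bar>y\<bar> m < prolate_sigma m p"
  shows "\<exists>dU dZ. (U0 m has_derivative dU) (at p) \<and> (Zsol m y has_derivative dZ) (at p) \<and>
      dZ = (\<lambda>h. cos (Upsilon y p) * dU h + sin (Upsilon y p) * hodge dU h)"
proof -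
  define \<sigma> \<delta> where "\<sigma> = prolate_sigma m p" and "\<delta> = prolate_delta m p"
  have \<sigma>_gt: "prolate_sigma m p > m"
    using assms(2) by simp
  note R = prolate_coordinates[OF assms(1), of p, folded \<sigma>_def \<delta>_def]
  have "\<sigma> - \<delta> > 0" "\<sigma> + \<delta> > 0" "\<sigma>\<^sup>2 - m\<^sup>2 > 0"
    using axis_dist_foci_pos[of m p] \<sigma>_gt assms(1) R(1,2) by (simp_all add: \<sigma>_def power_strict_mono)
  then have nz: "m \<noteq> 0" "\<sigma> - \<delta> \<noteq> 0" "\<sigma> + \<delta> \<noteq> 0" "\<sigma>\<^sup>2 - \<delta>\<^sup>2 \<noteq> 0" "\<sigma>\<^sup>2 - m\<^sup>2 \<noteq> 0"
    using assms(1) \<sigma>_gt by (simp_all add: \<sigma>_def power2_eq_square square_diff_square_factored)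
  note ups = cos_sin_Upsilon_prolate[OF assms, folded \<sigma>_def \<delta>_def]
  note dU = has_derivative_U0[OF assms(1) \<sigma>_gt, folded \<sigma>_def \<delta>_def]
  show ?thesis
  proof (cases "y = m")
    case True
    note dZ = has_derivative_Zsol_pole[OF assms(1) \<sigma>_gt, folded \<sigma>_def \<delta>_def]
    note eqs = prolate_gradient_identity_pole[OF nz(1,2,3,5) R(4)]
    show ?thesis
      unfolding True
      by (intro exI conjI, fact dU, fact dZ, rule lin_form_hodge)
        (use eqs ups True R(1,3) in simp_all)
  next
    case False
    note dZ = has_derivative_Zsol[OF assms(1) False assms(2), folded \<sigma>_def \<delta>_def]
    have N_nz: "y * \<sigma> - m * \<delta> - m * axis_dist y p \<noteq> 0"
      using Zsol_numerator_div_pos[OF assms(1) \<sigma>_gt False] by (auto simp: Zsol_numerator_def \<sigma>_def \<delta>_def)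
    have d_nz: "axis_dist y p \<noteq> 0"
      using axis_dist_pos[of m y p] assms by simp
    note eqs = prolate_gradient_identity[OF nz(1) d_nz nz(4,5) N_nz R(4)
        axis_dist_sq_prolate[OF assms(1), where c = y and p = p, folded \<sigma>_def \<delta>_def]]
    show ?thesis
      by (intro exI conjI, fact dU, fact dZ, rule lin_form_hodge)
        (use eqs ups R(3) in \<open>simp_all add: Zsol_numerator_def \<sigma>_def \<delta>_def\<close>)
  qed
qed

lemma solves_Z_Zsol:
  assumes "m > 0" and "r0 > 2 * m" and "\<bar>y\<bar> < r0 - m"
  shows "solves_Z m (exterior m r0) y (Zsol m y)"
  unfolding solves_Z_def
proof
  fix p assume "p \<in> exterior m r0"
  then have "max \<bar>y\<bar> m < prolate_sigma m p"
    using assms by (auto simp: exterior_iff)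
  from Zsol_equation_at[OF assms(1) this]
  show "\<exists>dU dZ. (U0 m has_derivative dU) (at p within weylK) \<and> (Zsol m y has_derivative dZ) (at p within weylK)
      \<and> dZ = (\<lambda>h. cos (Upsilon y p) * dU h + sin (Upsilon y p) * hodge dU h)"
    by (blast intro: has_derivative_at_withinI)
qed

section \<open>Decay at infinity\<close>

lemma abs_ln_diff_le:
  fixes X Y :: real
  assumes "X > 0" and "Y > 0"
  shows "\<bar>ln X - ln Y\<bar> \<le> \<bar>X - Y\<bar> / min X Y"
proof -
  have *: "\<bar>ln A - ln B\<bar> \<le> \<bar>A - B\<bar> / min A B" if "0 < B" "B \<le> A" for A B :: real
  proof -
    have "ln A - ln B = ln (A / B)"
      using that by (simp add: ln_div)
    also have "\<dots> \<le> A / B - 1"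
      using that by (intro ln_le_minus_one) simp
    also have "\<dots> = (A - B) / B"
      using that by (simp add: field_simps)
    finally show ?thesis
      using that by simp
  qed
  show ?thesis
    using *[of Y X] *[of X Y] assms by (cases "Y \<le> X") (simp_all add: abs_minus_commute min.commute)
qed

lemma vanishes_at_infinity_ln_diff:
  assumes "K \<ge> 0"
    and "\<And>p. p \<in> S \<Longrightarrow> \<exists>X Y. X > 0 \<and> Y > 0 \<and> \<bar>X - norm p\<bar> \<le> K \<and> \<bar>Y - norm p\<bar> \<le> K \<and> Z p = ln X - ln Y"
  shows "vanishes_at_infinity S Z"
  unfolding vanishes_at_infinity_def
proof (intro allI impI)
  fix e :: real assume "e > 0"
  show "\<exists>R. \<forall>p\<in>S. R < norm p \<longrightarrow> \<bar>Z p\<bar> < e"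
  proof (intro exI[of _ "K + 2 * K / e"] ballI impI)
    fix p assume "p \<in> S" and p_large: "K + 2 * K / e < norm p"
    then obtain X Y where XY: "X > 0" "Y > 0" "\<bar>X - norm p\<bar> \<le> K" "\<bar>Y - norm p\<bar> \<le> K" "Z p = ln X - ln Y"
      using assms(2) by blast
    have "min X Y > 2 * K / e"
      using XY p_large by (simp add: abs_le_iff)
    then have "2 * K < e * min X Y"
      using \<open>e > 0\<close> by (simp add: field_simps min_def)
    have "\<bar>Z p\<bar> \<le> \<bar>X - Y\<bar> / min X Y"
      unfolding XY(5) using XY by (intro abs_ln_diff_le)
    also have "\<dots> \<le> 2 * K / min X Y"
      using XY by (intro divide_right_mono) (simp_all add: abs_le_iff)
    also have "\<dots> < e"
      using \<open>2 * K < e * min X Y\<close> XY by (simp add: field_simps)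
    finally show "\<bar>Z p\<bar> < e" .
  qed
qed

lemma abs_Zsol_numerator_div_minus_norm_le:
  assumes "m \<ge> 0" and "y \<noteq> m"
  shows "\<bar>Zsol_numerator m y p / (y - m) - norm p\<bar> \<le> (2 * \<bar>y\<bar> * m + m * m) / \<bar>y - m\<bar>"
proof -
  define t where "t = norm p"
  have "Zsol_numerator m y p / (y - m) - t
      = (y * (prolate_sigma m p - t) - m * prolate_delta m p - m * (axis_dist y p - t)) / (y - m)"
    using assms(2) by (simp add: Zsol_numerator_def field_simps)
  then have "\<bar>Zsol_numerator m y p / (y - m) - t\<bar>
      = \<bar>y * (prolate_sigma m p - t) - m * prolate_delta m p - m * (axis_dist y p - t)\<bar> / \<bar>y - m\<bar>"
    by (simp add: abs_divide)
  also have "\<dots> \<le> (\<bar>y\<bar> * m + m * m + m * \<bar>y\<bar>) / \<bar>y - m\<bar>"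
  proof (rule divide_right_mono)
    have "\<bar>y * (prolate_sigma m p - t)\<bar> \<le> \<bar>y\<bar> * m"
      unfolding abs_mult t_def using abs_prolate_sigma_minus_norm_le[OF assms(1)] by (simp add: mult_left_mono)
    moreover have "\<bar>m * prolate_delta m p\<bar> \<le> m * m"
      unfolding abs_mult using abs_prolate_delta_le[OF assms(1)] assms(1) by (simp add: mult_left_mono)
    moreover have "\<bar>m * (axis_dist y p - t)\<bar> \<le> m * \<bar>y\<bar>"
      unfolding abs_mult t_def using abs_axis_dist_minus_norm_le assms(1) by (simp add: mult_left_mono)
    ultimately show "\<bar>y * (prolate_sigma m p - t) - m * prolate_delta m p - m * (axis_dist y p - t)\<bar>
        \<le> \<bar>y\<bar> * m + m * m + m * \<bar>y\<bar>"
      by linarith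
  qed simp
  finally show ?thesis
    by (simp add: t_def algebra_simps)
qed

lemma abs_sqrt_prolate_sigma_sq_minus_norm_le:
  assumes "m > 0" and "prolate_sigma m p > m"
  shows "\<bar>sqrt ((prolate_sigma m p)\<^sup>2 - m\<^sup>2) - norm p\<bar> \<le> 2 * m"
proof -
  define \<sigma> where "\<sigma> = prolate_sigma m p"
  have "m * (\<sigma> - m) \<ge> 0"
    using assms by (simp add: \<sigma>_def)
  then have "(\<sigma> - m)\<^sup>2 \<le> \<sigma>\<^sup>2 - m\<^sup>2" and "\<sigma>\<^sup>2 - m\<^sup>2 \<le> \<sigma>\<^sup>2"
    by (simp_all add: power2_eq_square algebra_simps)
  then have "sqrt ((\<sigma> - m)\<^sup>2) \<le> sqrt (\<sigma>\<^sup>2 - m\<^sup>2)" and "sqrt (\<sigma>\<^sup>2 - m\<^sup>2) \<le> sqrt (\<sigma>\<^sup>2)"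
    by (simp_all only: real_sqrt_le_mono)
  then have "\<sigma> - m \<le> sqrt (\<sigma>\<^sup>2 - m\<^sup>2)" and "sqrt (\<sigma>\<^sup>2 - m\<^sup>2) \<le> \<sigma>"
    using assms by (simp_all add: \<sigma>_def)
  moreover have "\<bar>\<sigma> - norm p\<bar> \<le> m"
    unfolding \<sigma>_def using abs_prolate_sigma_minus_norm_le assms(1) by simp
  ultimately show ?thesis
    by (auto simp: \<sigma>_def abs_le_iff)
qed

lemma Zsol_eq_ln_diff:
  fixes m y :: real and p :: "real \<times> real"
  assumes "m > 0" and "prolate_sigma m p > m"
  defines "K \<equiv> 2 * m + (2 * \<bar>y\<bar> * m + m * m) / \<bar>y - m\<bar>"
  shows "\<exists>X Y. X > 0 \<and> Y > 0 \<and> \<bar>X - norm p\<bar> \<le> K \<and> \<bar>Y - norm p\<bar> \<le> K \<and> Zsol m y p = ln X - ln Y"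
proof -
  define X where "X = sqrt ((prolate_sigma m p)\<^sup>2 - m\<^sup>2)"
  have C: "(2 * \<bar>y\<bar> * m + m * m) / \<bar>y - m\<bar> \<ge> 0"
    using assms(1) by simp
  have "(prolate_sigma m p)\<^sup>2 - m\<^sup>2 > 0"
    using assms(1,2) by (simp add: power_strict_mono)
  then have X_pos: "X > 0" and ln_X: "ln X = ln ((prolate_sigma m p)\<^sup>2 - m\<^sup>2) / 2"
    by (simp_all add: X_def ln_sqrt)
  have X_norm: "\<bar>X - norm p\<bar> \<le> K"
    using abs_sqrt_prolate_sigma_sq_minus_norm_le[OF assms(1,2)] C unfolding K_def X_def by linarith
  show ?thesis
  proof (cases "y = m")
    case True
    have "axis_dist m p > 0"
      using axis_dist_foci_pos(1)[of m p] assms(1,2) by simp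
    moreover have "\<bar>axis_dist m p - norm p\<bar> \<le> m"
      using abs_axis_dist_minus_norm_le[of m p] assms(1) by simp
    then have "\<bar>axis_dist m p - norm p\<bar> \<le> K"
      using assms(1) C unfolding K_def by linarith
    moreover have "Zsol m y p = ln (axis_dist m p) - ln X"
      using True ln_X by (simp add: Zsol_def)
    ultimately show ?thesis
      using X_pos X_norm by blast
  next
    case False
    have "Zsol_numerator m y p / (y - m) > 0"
      using Zsol_numerator_div_pos assms(1,2) False by blast
    moreover have "\<bar>Zsol_numerator m y p / (y - m) - norm p\<bar> \<le> K"
      using abs_Zsol_numerator_div_minus_norm_le[of m y p] assms(1) False by (simp add: K_def)
    moreover have "Zsol m y p = ln X - ln (Zsol_numerator m y p / (y - m))"
      using False ln_X by (simp add: Zsol_def)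
    ultimately show ?thesis
      using X_pos X_norm by blast
  qed
qed

lemma vanishes_at_infinity_Zsol:
  assumes "m > 0" and "r0 > 2 * m"
  shows "vanishes_at_infinity (exterior m r0) (Zsol m y)"
proof (rule vanishes_at_infinity_ln_diff)
  show "2 * m + (2 * \<bar>y\<bar> * m + m * m) / \<bar>y - m\<bar> \<ge> 0"
    using assms(1) by simp
  fix p assume "p \<in> exterior m r0"
  then have "prolate_sigma m p > m"
    using assms(2) by (simp add: exterior_iff)
  then show "\<exists>X Y. X > 0 \<and> Y > 0 \<and> \<bar>X - norm p\<bar> \<le> 2 * m + (2 * \<bar>y\<bar> * m + m * m) / \<bar>y - m\<bar>
      \<and> \<bar>Y - norm p\<bar> \<le> 2 * m + (2 * \<bar>y\<bar> * m + m * m) / \<bar>y - m\<bar> \<and> Zsol m y p = ln X - ln Y"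
    by (rule Zsol_eq_ln_diff[OF assms(1)])
qed

section \<open>Uniqueness\<close>

lemma has_derivative_within_weylK_unique:
  assumes "q \<in> weylK"
    and "(f has_derivative f1) (at q within weylK)" and "(f has_derivative f2) (at q within weylK)"
  shows "f1 = f2"
proof (rule frechet_derivative_unique_within[OF assms(2,3)])
  fix i :: "real \<times> real" and e :: real
  assume "i \<in> Basis" and "e > 0"
  then have "q + (e / 2) *\<^sub>R i \<in> weylK"
    using assms(1) by (auto simp: Basis_prod_def weylK_def)
  with \<open>e > 0\<close> show "\<exists>d. 0 < \<bar>d\<bar> \<and> \<bar>d\<bar> < e \<and> q + d *\<^sub>R i \<in> weylK"
    by (intro exI[of _ "e / 2"]) simp
qed

lemma solves_Z_diff_has_derivative_zero:
  assumes "solves_Z m D y Z1" and "solves_Z m D y Z2" and "D \<subseteq> weylK" and "q \<in> D"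
  shows "((\<lambda>x. Z1 x - Z2 x) has_derivative (\<lambda>h. 0)) (at q within weylK)"
proof -
  obtain dU1 dZ1 where 1: "(U0 m has_derivative dU1) (at q within weylK)" "(Z1 has_derivative dZ1) (at q within weylK)"
      "dZ1 = (\<lambda>h. cos (Upsilon y q) * dU1 h + sin (Upsilon y q) * hodge dU1 h)"
    using assms(1,4) unfolding solves_Z_def by blast
  obtain dU2 dZ2 where 2: "(U0 m has_derivative dU2) (at q within weylK)" "(Z2 has_derivative dZ2) (at q within weylK)"
      "dZ2 = (\<lambda>h. cos (Upsilon y q) * dU2 h + sin (Upsilon y q) * hodge dU2 h)"
    using assms(2,4) unfolding solves_Z_def by blast
  have "dU1 = dU2"
    using assms(3,4) 1(1) 2(1) by (intro has_derivative_within_weylK_unique) auto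
  with 1(3) 2(3) have "dZ1 = dZ2"
    by simp
  with has_derivative_diff[OF 1(2) 2(2)] show ?thesis
    by simp
qed

lemma solves_Z_diff_scaleR_eq:
  assumes "solves_Z m (exterior m r0) y Z1" and "solves_Z m (exterior m r0) y Z2"
    and "p \<in> exterior m r0" and "T \<ge> 1"
  shows "Z1 (T *\<^sub>R p) - Z2 (T *\<^sub>R p) = Z1 p - Z2 p"
proof -
  define g where "g t = Z1 (t *\<^sub>R p) - Z2 (t *\<^sub>R p)" for t
  have "g 1 = g T"
  proof (rule has_derivative_zero_unique[where f = g, OF convex_real_interval(5)[of 1 T]])
    fix t assume "t \<in> {1..T}"
    have "(\<lambda>t. t *\<^sub>R p) ` {1..T} \<subseteq> weylK"
      using exterior_scaleR[OF assms(3)] exterior_subset_weylK by fastforce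
    moreover have "t *\<^sub>R p \<in> exterior m r0"
      using exterior_scaleR[OF assms(3)] \<open>t \<in> {1..T}\<close> by simp
    ultimately have "((\<lambda>x. Z1 x - Z2 x) has_derivative (\<lambda>h. 0)) (at (t *\<^sub>R p) within (\<lambda>t. t *\<^sub>R p) ` {1..T})"
      using solves_Z_diff_has_derivative_zero[OF assms(1,2) exterior_subset_weylK] has_derivative_subset
      by blast
    from has_derivative_in_compose[OF bounded_linear_imp_has_derivative[OF bounded_linear_scaleR_left] this]
    show "(g has_derivative (\<lambda>h. 0)) (at t within {1..T})"
      by (simp add: g_def[abs_def])
  qed (use assms(4) in auto)
  then show ?thesis
    by (simp add: g_def)
qed

text \<open>The difference of two solutions is constant on each ray \<open>t \<mapsto> t p\<close>, \<open>t \<ge> 1\<close>, which stays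
  in the exterior and leaves every ball, where both solutions are small.\<close>
lemma solves_Z_unique:
  assumes "m > 0" and "r0 > 2 * m"
    and "solves_Z m (exterior m r0) y Z1" and "vanishes_at_infinity (exterior m r0) Z1"
    and "solves_Z m (exterior m r0) y Z2" and "vanishes_at_infinity (exterior m r0) Z2"
    and "p \<in> exterior m r0"
  shows "Z1 p = Z2 p"
proof -
  have "norm p > 0"
    using assms(1,2,7) by (auto simp: exterior_iff prolate_sigma_def axis_dist_eq)
  have "\<bar>Z1 p - Z2 p\<bar> < e" if "e > 0" for e
  proof -
    obtain R1 R2 where R1: "\<forall>q\<in>exterior m r0. R1 < norm q \<longrightarrow> \<bar>Z1 q\<bar> < e / 2"
      and R2: "\<forall>q\<in>exterior m r0. R2 < norm q \<longrightarrow> \<bar>Z2 q\<bar> < e / 2"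
      using assms(4,6) \<open>e > 0\<close> unfolding vanishes_at_infinity_def by (meson half_gt_zero)
    define T where "T = 1 + (\<bar>R1\<bar> + \<bar>R2\<bar>) / norm p"
    have "T \<ge> 1" and "norm (T *\<^sub>R p) = norm p + \<bar>R1\<bar> + \<bar>R2\<bar>"
      using \<open>norm p > 0\<close> by (simp_all add: T_def field_simps)
    moreover have "T *\<^sub>R p \<in> exterior m r0"
      using exterior_scaleR[OF assms(7) \<open>T \<ge> 1\<close>] .
    moreover have "R1 < norm (T *\<^sub>R p)" and "R2 < norm (T *\<^sub>R p)"
      using calculation(2) \<open>norm p > 0\<close> by linarith+
    ultimately have "\<bar>Z1 (T *\<^sub>R p)\<bar> < e / 2" and "\<bar>Z2 (T *\<^sub>R p)\<bar> < e / 2"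
      using R1 R2 by blast+
    with solves_Z_diff_scaleR_eq[OF assms(3,5,7) \<open>T \<ge> 1\<close>] show ?thesis
      by linarith
  qed
  then show ?thesis
    by (metis zero_less_abs_iff less_irrefl eq_iff_diff_eq_0)
qed

section \<open>Values at Schwarzschild points\<close>

lemma Sroot_foci:
  assumes "m \<ge> 0" and "x \<ge> 1"
  shows "Sroot m m x \<theta> = m * (x - cos \<theta>)" and "Sroot m (-m) x \<theta> = m * (x + cos \<theta>)"
proof -
  have "Sroot m m x \<theta> = sqrt ((m * (x - cos \<theta>))\<^sup>2)" and "Sroot m (-m) x \<theta> = sqrt ((m * (x + cos \<theta>))\<^sup>2)"
    unfolding Sroot_def sin_squared_eq by (simp_all add: power2_eq_square algebra_simps)
  moreover have "x - cos \<theta> \<ge> 0" and "x + cos \<theta> \<ge> 0"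
    using assms(2) cos_le_one[of \<theta>] cos_ge_minus_one[of \<theta>] by linarith+
  ultimately show "Sroot m m x \<theta> = m * (x - cos \<theta>)" and "Sroot m (-m) x \<theta> = m * (x + cos \<theta>)"
    using assms(1) by simp_all
qed

lemma weyl_of_prolate:
  fixes m r \<theta> :: real
  assumes "m > 0" and "r > 2 * m" and "0 \<le> \<theta>" and "\<theta> \<le> pi"
  defines "x \<equiv> r / m - 1" and "p \<equiv> weyl_of m r \<theta>"
  shows "x > 1" and "fst p \<ge> 0" and "axis_dist c p = Sroot m c x \<theta>"
    and "prolate_sigma m p = m * x" and "prolate_delta m p = m * cos \<theta>"
proof -
  show "x > 1"
    using assms(1,2) by (simp add: x_def field_simps)
  have r: "r = m * (x + 1)"
    using assms(1) by (simp add: x_def field_simps)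
  have "1 - 2 * m / r \<ge> 0"
    using assms(1,2) by (simp add: field_simps)
  then show "fst p \<ge> 0"
    using assms(1,2,3,4) by (simp add: p_def weyl_of_def sin_ge_zero)
  have "(fst p)\<^sup>2 = r\<^sup>2 * (sin \<theta>)\<^sup>2 * (1 - 2 * m / r)"
    using \<open>1 - 2 * m / r \<ge> 0\<close> by (simp add: p_def weyl_of_def power_mult_distrib)
  also have "\<dots> = (sin \<theta>)\<^sup>2 * (r * (r - 2 * m))"
    using assms(1,2) by (simp add: field_simps power2_eq_square)
  also have "\<dots> = m\<^sup>2 * (x\<^sup>2 - 1) * (sin \<theta>)\<^sup>2"
    unfolding r by (simp add: power2_eq_square algebra_simps)
  finally have fst_sq: "(fst p)\<^sup>2 = m\<^sup>2 * (x\<^sup>2 - 1) * (sin \<theta>)\<^sup>2" .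
  have "snd p = m * x * cos \<theta>"
    by (simp add: p_def weyl_of_def r algebra_simps)
  then have "(fst p)\<^sup>2 + (snd p - b)\<^sup>2 = m\<^sup>2 * x\<^sup>2 + b\<^sup>2 - 2 * m * x * b * cos \<theta> - m\<^sup>2 * (sin \<theta>)\<^sup>2" for b
    unfolding fst_sq sin_squared_eq by (simp add: power2_eq_square algebra_simps)
  then have Sroot: "axis_dist b p = Sroot m b x \<theta>" for b
    by (simp add: axis_dist_eq Sroot_def)
  then show "axis_dist c p = Sroot m c x \<theta>" .
  have "axis_dist m p = m * (x - cos \<theta>)" and "axis_dist (-m) p = m * (x + cos \<theta>)"
    using Sroot[of m] Sroot[of "-m"] Sroot_foci[of m x \<theta>] assms(1) \<open>x > 1\<close> by simp_all
  then show "prolate_sigma m p = m * x" and "prolate_delta m p = m * cos \<theta>"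
    by (simp_all add: prolate_sigma_def prolate_delta_def algebra_simps)
qed

lemma weyl_of_mem_exterior:
  assumes "m > 0" and "r0 > 2 * m" and "r > r0" and "0 \<le> \<theta>" and "\<theta> \<le> pi"
  shows "weyl_of m r \<theta> \<in> exterior m r0"
proof -
  have "prolate_sigma m (weyl_of m r \<theta>) = r - m"
    using weyl_of_prolate(4)[of m r \<theta>] assms by (simp add: right_diff_distrib)
  then show ?thesis
    using weyl_of_prolate(2)[of m r \<theta>] assms by (simp add: exterior_iff)
qed

lemma exp_minus_Zsol_weyl_of:
  fixes m r \<theta> y :: real
  assumes "m > 0" and "r > 2 * m" and "0 \<le> \<theta>" and "\<theta> \<le> pi"
  defines "x \<equiv> r / m - 1" and "p \<equiv> weyl_of m r \<theta>"
  shows "y \<noteq> m \<Longrightarrow> exp (- Zsol m y p) = expmZ_formula m y x \<theta>"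
    and "exp (- Zsol m m p) = sqrt (x\<^sup>2 - 1) / (x - cos \<theta>)"
proof -
  note W = weyl_of_prolate[OF assms(1-4), folded x_def p_def]
  define K where "K = sqrt (x\<^sup>2 - 1)"
  have "1 < x\<^sup>2"
    using power_strict_mono[OF W(1), of 2] by simp
  then have "K > 0" and "(prolate_sigma m p)\<^sup>2 - m\<^sup>2 = (m * K)\<^sup>2"
    by (simp_all add: K_def W(4) power_mult_distrib algebra_simps)
  then have half_ln: "ln ((prolate_sigma m p)\<^sup>2 - m\<^sup>2) / 2 = ln (m * K)"
    using assms(1) by (simp add: ln_realpow)
  have "prolate_sigma m p > m"
    using assms(1) W(1,4) by simp
  show "exp (- Zsol m y p) = expmZ_formula m y x \<theta>" if "y \<noteq> m"
  proof -
    have "Zsol_numerator m y p / (y - m) > 0"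
      by (rule Zsol_numerator_div_pos) fact+
    then have "exp (- Zsol m y p) = Zsol_numerator m y p / (y - m) / (m * K)"
      using \<open>y \<noteq> m\<close> \<open>K > 0\<close> assms(1) by (simp add: Zsol_def half_ln exp_diff)
    also have "Zsol_numerator m y p = m * (y * x - m * cos \<theta> - Sroot m y x \<theta>)"
      by (simp add: Zsol_numerator_def W(3-5) algebra_simps)
    finally show ?thesis
      using assms(1) by (simp add: expmZ_formula_def K_def)
  qed
  have "axis_dist m p = m * (x - cos \<theta>)"
    using prolate_coordinates(1)[OF assms(1), of p] by (simp add: W(4,5) algebra_simps)
  moreover have "x - cos \<theta> > 0"
    using W(1) cos_le_one[of \<theta>] by linarith
  ultimately show "exp (- Zsol m m p) = sqrt (x\<^sup>2 - 1) / (x - cos \<theta>)"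
    using \<open>K > 0\<close> assms(1) by (simp add: Zsol_def half_ln exp_diff K_def)
qed

lemma Psi_y_weyl_of:
  fixes m r \<theta> y :: real
  assumes "m > 0" and "r > 2 * m" and "0 \<le> \<theta>" and "\<theta> \<le> pi"
  defines "x \<equiv> r / m - 1" and "p \<equiv> weyl_of m r \<theta>"
  shows "Psi_y m Z y p = (x - 1) / (x + 1) * (exp (- Z p))\<^sup>2 / Sroot m y x \<theta>"
proof -
  note W = weyl_of_prolate[OF assms(1-4), folded x_def p_def]
  have "m + m * x > 0"
    using assms(1) W(1) by (simp add: add_pos_pos)
  then have "1 - 2 * m / (m + m * x) = (x - 1) / (x + 1)"
    using assms(1) W(1) by (simp add: field_simps)
  moreover have "(x - 1) / (x + 1) > 0"
    using W(1) by simp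
  ultimately have "exp (2 * U0 m p) = (x - 1) / (x + 1)"
    by (simp add: U0_eq_prolate_sigma W(4))
  moreover have "exp (2 * U0 m p - 2 * Z p) = exp (2 * U0 m p) * (exp (- Z p))\<^sup>2"
    by (simp add: exp_diff power2_eq_square exp_minus field_simps flip: exp_add)
  ultimately show ?thesis
    using W(3)[of y] by (simp add: Psi_y_def axis_dist_eq)
qed

lemma psi_y_weyl_of:
  assumes "m > 0" and "r > 2 * m" and "0 \<le> \<theta>" and "\<theta> \<le> pi"
  shows "psi_y y (weyl_of m r \<theta>) = 1 / Sroot m y (r / m - 1) \<theta>"
  using weyl_of_prolate(3)[OF assms, of y] by (simp add: psi_y_def axis_dist_eq)

lemma Psi_formula_eq:
  assumes "x > 1"
  shows "Psi_formula m y x \<theta> = (x - 1) / (x + 1) * (expmZ_formula m y x \<theta>)\<^sup>2 / Sroot m y x \<theta>"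
proof -
  define A where "A = y * x - m * cos \<theta> - Sroot m y x \<theta>"
  have "1 < x\<^sup>2"
    using power_strict_mono[OF assms, of 2] by simp
  then have "(sqrt (x\<^sup>2 - 1))\<^sup>2 = (x - 1) * (x + 1)"
    by (simp add: power2_eq_square algebra_simps)
  then have sq: "(expmZ_formula m y x \<theta>)\<^sup>2 = A\<^sup>2 / ((y - m)\<^sup>2 * ((x - 1) * (x + 1)))"
    by (simp add: expmZ_formula_def A_def power_divide power_mult_distrib)
  have cancel: "a / (D * u\<^sup>2 * S) = v / u * (a / (D * (v * u))) / S" if "u \<noteq> 0" "v \<noteq> 0" for a D S u v :: real
    using that by (cases "D = 0"; cases "S = 0") (simp_all add: field_simps power2_eq_square)
  show ?thesis
    unfolding Psi_formula_def A_def[symmetric] sq by (rule cancel) (use assms in simp_all)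
qed

lemma tendsto_Sroot: "((\<lambda>y'. Sroot m y' x \<theta>) \<longlongrightarrow> Sroot m y x \<theta>) (at y)"
  unfolding Sroot_def by (intro tendsto_intros)

text \<open>Multiplying by the conjugate \<open>y x - m cos \<theta> + Sroot\<close> cancels the factor \<open>y - m\<close>, which makes
  the singularity of \<open>expmZ_formula\<close> at \<open>y = m\<close> removable.\<close>
lemma expmZ_formula_conjugate:
  assumes "x > 1" and "y \<noteq> m" and "y * x - m * cos \<theta> + Sroot m y x \<theta> \<noteq> 0"
  shows "expmZ_formula m y x \<theta> = (y + m) * sqrt (x\<^sup>2 - 1) / (y * x - m * cos \<theta> + Sroot m y x \<theta>)"
proof -
  define K where "K = sqrt (x\<^sup>2 - 1)"
  define S where "S = Sroot m y x \<theta>"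
  have "1 < x\<^sup>2"
    using power_strict_mono[OF assms(1), of 2] by simp
  then have K: "K \<noteq> 0" "K\<^sup>2 = x\<^sup>2 - 1"
    by (simp_all add: K_def)
  have "m\<^sup>2 * x\<^sup>2 + y\<^sup>2 - 2 * m * x * y * cos \<theta> - m\<^sup>2 * (sin \<theta>)\<^sup>2
      = (y - m * x * cos \<theta>)\<^sup>2 + m\<^sup>2 * (sin \<theta>)\<^sup>2 * (x\<^sup>2 - 1)"
    unfolding sin_squared_eq by (simp add: power2_eq_square algebra_simps)
  also have "\<dots> \<ge> 0"
    using \<open>1 < x\<^sup>2\<close> by simp
  finally have "S\<^sup>2 = m\<^sup>2 * x\<^sup>2 + y\<^sup>2 - 2 * m * x * y * cos \<theta> - m\<^sup>2 * (1 - (cos \<theta>)\<^sup>2)"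
    by (simp add: S_def Sroot_def sin_squared_eq)
  then have conj: "(y * x - m * cos \<theta> - S) * (y * x - m * cos \<theta> + S) = (y - m) * (y + m) * K\<^sup>2"
    unfolding K(2) by (simp add: power2_eq_square algebra_simps)
  have "expmZ_formula m y x \<theta> = (y * x - m * cos \<theta> - S) * (y * x - m * cos \<theta> + S)
      / ((y - m) * K * (y * x - m * cos \<theta> + S))"
    using assms(3) by (simp add: expmZ_formula_def S_def K_def)
  also have "\<dots> = (y + m) * K / (y * x - m * cos \<theta> + S)"
    unfolding conj using assms(2) K(1) by (simp add: power2_eq_square)
  finally show ?thesis
    by (simp add: K_def S_def)
qed

lemma tendsto_expmZ_formula_pole:
  assumes "m > 0" and "x > 1"
  shows "((\<lambda>y'. expmZ_formula m y' x \<theta>) \<longlongrightarrow> sqrt (x\<^sup>2 - 1) / (x - cos \<theta>)) (at m)"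
proof -
  define den where "den y' = y' * x - m * cos \<theta> + Sroot m y' x \<theta>" for y'
  have "x - cos \<theta> > 0"
    using assms(2) cos_le_one[of \<theta>] by linarith
  moreover have den_m: "den m = 2 * m * (x - cos \<theta>)"
    using Sroot_foci(1)[of m x \<theta>] assms by (simp add: den_def algebra_simps)
  ultimately have "den m > 0"
    using assms(1) by simp
  have "(den \<longlongrightarrow> den m) (at m)"
    unfolding den_def by (intro tendsto_intros tendsto_Sroot)
  then have "eventually (\<lambda>y'. den y' > 0) (at m)"
    using \<open>den m > 0\<close> by (rule order_tendstoD(1))
  then have "eventually (\<lambda>y'. (y' + m) * sqrt (x\<^sup>2 - 1) / den y' = expmZ_formula m y' x \<theta>) (at m)"
    using eventually_neq_at_within[of m m UNIV]
    by eventually_elim (simp add: den_def expmZ_formula_conjugate[OF assms(2)])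
  moreover have "((\<lambda>y'. (y' + m) * sqrt (x\<^sup>2 - 1) / den y') \<longlongrightarrow> (m + m) * sqrt (x\<^sup>2 - 1) / den m) (at m)"
    using \<open>(den \<longlongrightarrow> den m) (at m)\<close> \<open>den m > 0\<close> by (intro tendsto_intros) simp_all
  moreover have "(m + m) * sqrt (x\<^sup>2 - 1) / den m = sqrt (x\<^sup>2 - 1) / (x - cos \<theta>)"
    using assms(1) by (simp add: den_m)
  ultimately show ?thesis
    using Lim_transform_eventually by fastforce
qed

lemma Zsol_formulas_weyl_of:
  assumes "m > 0" and "r > 2 * m" and "0 \<le> \<theta>" and "\<theta> \<le> pi"
    and Z: "Z (weyl_of m r \<theta>) = Zsol m y (weyl_of m r \<theta>)"
  shows "let x = r / m - 1; p = weyl_of m r \<theta> in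
    (y \<noteq> m \<longrightarrow> exp (- Z p) = expmZ_formula m y x \<theta> \<and> Psi_y m Z y p = Psi_formula m y x \<theta>) \<and>
    (y = m \<longrightarrow> ((\<lambda>y'. expmZ_formula m y' x \<theta>) \<longlongrightarrow> exp (- Z p)) (at m)
               \<and> ((\<lambda>y'. Psi_formula m y' x \<theta>) \<longlongrightarrow> Psi_y m Z y p) (at m)) \<and>
    psi_y y p = 1 / Sroot m y x \<theta>"
proof -
  define x p where "x = r / m - 1" and "p = weyl_of m r \<theta>"
  note x_gt_1 = weyl_of_prolate(1)[OF assms(1-4), folded x_def]
  note Psi = Psi_y_weyl_of[OF assms(1-4), of Z y, folded x_def p_def]
  have "exp (- Z p) = expmZ_formula m y x \<theta> \<and> Psi_y m Z y p = Psi_formula m y x \<theta>" if "y \<noteq> m"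
    using exp_minus_Zsol_weyl_of(1)[OF assms(1-4) that] Z Psi Psi_formula_eq[OF x_gt_1]
    by (simp add: x_def p_def)
  moreover have "((\<lambda>y'. expmZ_formula m y' x \<theta>) \<longlongrightarrow> exp (- Z p)) (at m)
      \<and> ((\<lambda>y'. Psi_formula m y' x \<theta>) \<longlongrightarrow> Psi_y m Z y p) (at m)" if "y = m"
  proof
    have "exp (- Z p) = sqrt (x\<^sup>2 - 1) / (x - cos \<theta>)"
      using exp_minus_Zsol_weyl_of(2)[OF assms(1-4)] Z that by (simp add: x_def p_def)
    then show lim: "((\<lambda>y'. expmZ_formula m y' x \<theta>) \<longlongrightarrow> exp (- Z p)) (at m)"
      using tendsto_expmZ_formula_pole[OF assms(1) x_gt_1] by simp
    have "x - cos \<theta> > 0"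
      using x_gt_1 cos_le_one[of \<theta>] by linarith
    then have "Sroot m m x \<theta> \<noteq> 0"
      using Sroot_foci(1)[of m x \<theta>] assms(1) x_gt_1 by simp
    then have "((\<lambda>y'. (x - 1) / (x + 1) * (expmZ_formula m y' x \<theta>)\<^sup>2 / Sroot m y' x \<theta>) \<longlongrightarrow>
        (x - 1) / (x + 1) * (exp (- Z p))\<^sup>2 / Sroot m m x \<theta>) (at m)"
      by (intro tendsto_intros lim tendsto_Sroot)
    then show "((\<lambda>y'. Psi_formula m y' x \<theta>) \<longlongrightarrow> Psi_y m Z y p) (at m)"
      unfolding Psi_formula_eq[OF x_gt_1] using Psi that by simp
  qed
  moreover have "psi_y y p = 1 / Sroot m y x \<theta>"
    using psi_y_weyl_of[OF assms(1-4)] by (simp add: x_def p_def)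
  ultimately show ?thesis
    unfolding Let_def x_def[symmetric] p_def[symmetric] by blast
qed

theorem mainTheorem10:
  fixes m r0 :: real
  assumes "m > 0" and "r0 > 2 * m"
  defines "x0 \<equiv> r0 / m - 1"
  shows "\<forall>y. - m * x0 < y \<and> y < m * x0 \<longrightarrow>
     (\<exists>Z. solves_Z m (exterior m r0) y Z \<and> vanishes_at_infinity (exterior m r0) Z) \<and>
     (\<forall>Z. solves_Z m (exterior m r0) y Z \<and> vanishes_at_infinity (exterior m r0) Z \<longrightarrow>
        (\<forall>r \<theta>. r > r0 \<and> 0 \<le> \<theta> \<and> \<theta> \<le> pi \<longrightarrow>
          (let x = r / m - 1; p = weyl_of m r \<theta> in
            (y \<noteq> m \<longrightarrow> exp (- Z p) = expmZ_formula m y x \<theta>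
                       \<and> Psi_y m Z y p = Psi_formula m y x \<theta>) \<and>
            (y = m \<longrightarrow> ((\<lambda>y'. expmZ_formula m y' x \<theta>) \<longlongrightarrow> exp (- Z p)) (at m)
                       \<and> ((\<lambda>y'. Psi_formula m y' x \<theta>) \<longlongrightarrow> Psi_y m Z y p) (at m)) \<and>
            psi_y y p = 1 / Sroot m y x \<theta>)))"
proof (intro allI impI conjI)
  fix y assume "- m * x0 < y \<and> y < m * x0"
  moreover have "m * x0 = r0 - m"
    using assms(1) by (simp add: x0_def right_diff_distrib)
  ultimately have y: "\<bar>y\<bar> < r0 - m"
    by linarith
  show "\<exists>Z. solves_Z m (exterior m r0) y Z \<and> vanishes_at_infinity (exterior m r0) Z"
    using solves_Z_Zsol[OF assms(1,2) y] vanishes_at_infinity_Zsol[OF assms(1,2)] by blast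
  fix Z r \<theta>
  assume "solves_Z m (exterior m r0) y Z \<and> vanishes_at_infinity (exterior m r0) Z"
    and r_\<theta>: "r > r0 \<and> 0 \<le> \<theta> \<and> \<theta> \<le> pi"
  then have "Z (weyl_of m r \<theta>) = Zsol m y (weyl_of m r \<theta>)"
    using solves_Z_unique[OF assms(1,2)] solves_Z_Zsol[OF assms(1,2) y] vanishes_at_infinity_Zsol[OF assms(1,2)]
      weyl_of_mem_exterior[OF assms(1,2)] by blast
  then show "let x = r / m - 1; p = weyl_of m r \<theta> in
      (y \<noteq> m \<longrightarrow> exp (- Z p) = expmZ_formula m y x \<theta> \<and> Psi_y m Z y p = Psi_formula m y x \<theta>) \<and>
      (y = m \<longrightarrow> ((\<lambda>y'. expmZ_formula m y' x \<theta>) \<longlongrightarrow> exp (- Z p)) (at m)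
                 \<and> ((\<lambda>y'. Psi_formula m y' x \<theta>) \<longlongrightarrow> Psi_y m Z y p) (at m)) \<and>
      psi_y y p = 1 / Sroot m y x \<theta>"
    using r_\<theta> assms(2) by (intro Zsol_formulas_weyl_of[OF assms(1)]) simp_all
qed

end
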